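(* Let $\mathfrak g\xrightarrow{\mu}\mathfrak h$ be a crossed module of Lie algebras with action $\mathcal L$, $\phi:W\to V$ linear, and $(\rho_0^1,\rho_0^0,\rho_1)$ a 2-representation on $\phi$. For $k\in\{1,2\}$ let $(\omega_k,\alpha_k,\varphi_k)\in(\bigwedge^2\mathfrak h^*\otimes V)\oplus(\mathfrak h^*\otimes\mathfrak g^*\otimes W)\oplus(\mathfrak g^*\otimes V)$ be triples such that the following data define 2-extensions $E_k$ of $\mathfrak g\xrightarrow{\mu}\mathfrak h$ by $W\xrightarrow{\phi}V$: $\mathfrak e_0=\mathfrak h\oplus V$ with bracket $[(y_0,v_0),(y_1,v_1)]=([y_0,y_1],\rho_0^0(y_0)v_1-\rho_0^0(y_1)v_0-\omega_k(y_0,y_1))$; $\mathfrak e_1=\mathfrak g\oplus W$ with bracket $[(x_0,w_0),(x_1,w_1)]=([x_0,x_1],\rho_0^1(\mu(x_0))w_1-\rho_0^1(\mu(x_1))w_0-\omega_k'(x_0,x_1))$, where $\omega_k'(x_0,x_1)=\rho_1(x_1)\varphi_k(x_0)+\alpha_k(\mu(x_0);x_1)$; structure map $\epsilon_k(x,w)=(\mu(x),\phi(w)+\varphi_k(x))$; action $\mathcal L^{\epsilon_k}_{(y,v)}(x,w)=(\mathcal L_yx,\rho_0^1(y)w-\rho_1(x)v-\alpha_k(y;x))$; with the obvious inclusions and first-coordinate projections. Then $E_1$ and $E_2$ are equivalent if and only if there are linear maps $\lambda_0:\mathfrak h\to V$ and $\lambda_1:\mathfrak g\to W$ with (a) $\omega_2(y_0,y_1)-\omega_1(y_0,y_1)=\rho_0^0(y_0)\lambda_0(y_1)-\rho_0^0(y_1)\lambda_0(y_0)-\lambda_0([y_0,y_1])$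 for all $y_0,y_1\in\mathfrak h$; (b) $\alpha_2(y;x)-\alpha_1(y;x)=\rho_0^1(y)(\lambda_1(x))-\lambda_1(\mathcal L_yx)-\rho_1(x)(\lambda_0(y))$ for all $y\in\mathfrak h$, $x\in\mathfrak g$; (c) $\varphi_2(x)-\varphi_1(x)=\lambda_0(\mu(x))-\phi(\lambda_1(x))$ for all $x\in\mathfrak g$.
   Context: A crossed module of Lie algebras: Lie algebras $\mathfrak g,\mathfrak h$, Lie homomorphism $\mu:\mathfrak g\to\mathfrak h$, Lie homomorphism $\mathcal L:\mathfrak h\to\mathrm{Der}(\mathfrak g)$ with $\mu(\mathcal L_yx)=[y,\mu(x)]$, $\mathcal L_{\mu(x_0)}x_1=[x_0,x_1]$. A morphism of crossed modules is a pair of Lie algebra homomorphisms commuting with structure maps and intertwining actions. $\phi:W\to V$ is regarded as a crossed module with abelian brackets and zero action. 2-representation: linear $\rho_0^1:\mathfrak h\to\mathfrak{gl}(W)$, $\rho_0^0:\mathfrak h\to\mathfrak{gl}(V)$, $\rho_1:\mathfrak g\to\mathrm{Hom}(V,W)$ with $\rho_0^1,\rho_0^0$ representations, $\phi\rho_0^1(y)=\rho_0^0(y)\phi$, $\rho_1([x_0,x_1])=\rho_1(x_0)\phi\rho_1(x_1)-\rho_1(x_1)\phi\rho_1(x_0)$, $\rho_0^0(\mu(x))=\phi\rho_1(x)$, $\rho_0^1(\mu(x))=\rho_1(x)\phi$, $\rho_1(\mathcal L_yx)=\rho_0^1(y)\rho_1(x)-\rho_1(x)\rho_0^0(y)$.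 A 2-extension of $\mathfrak g\xrightarrow{\mu}\mathfrak h$ by $W\xrightarrow{\phi}V$ is a crossed module $\mathfrak e_1\to\mathfrak e_0$ with crossed module morphisms $(W\to V)\to(\mathfrak e_1\to\mathfrak e_0)\to(\mathfrak g\to\mathfrak h)$ giving short exact sequences $0\to W\to\mathfrak e_1\to\mathfrak g\to0$ and $0\to V\to\mathfrak e_0\to\mathfrak h\to0$. Two extensions are equivalent if there is an isomorphism of crossed modules between their middle terms commuting with the inclusions and projections. *)

theory Defs
  imports Complex_Main "HOL-Library.Product_Plus"
begin

text \<open>All vector spaces are over a common field 'k, given by scalar multiplications
  on (whole) types; linear maps are Vector_Spaces.linear.\<close>

definition lie_algebra ::
  "('k::field \<Rightarrow> 'a::ab_group_add \<Rightarrow> 'a) \<Rightarrow> ('a \<Rightarrow> 'a \<Rightarrow> 'a) \<Rightarrow> bool" where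
  "lie_algebra s br \<longleftrightarrow> vector_space s
     \<and> (\<forall>x. Vector_Spaces.linear s s (br x))
     \<and> (\<forall>y. Vector_Spaces.linear s s (\<lambda>x. br x y))
     \<and> (\<forall>x. br x x = 0)
     \<and> (\<forall>x y z. br x (br y z) + br y (br z x) + br z (br x y) = 0)"

definition lie_hom ::
  "('k::field \<Rightarrow> 'a::ab_group_add \<Rightarrow> 'a) \<Rightarrow> ('a \<Rightarrow> 'a \<Rightarrow> 'a) \<Rightarrow>
   ('k \<Rightarrow> 'b::ab_group_add \<Rightarrow> 'b) \<Rightarrow> ('b \<Rightarrow> 'b \<Rightarrow> 'b) \<Rightarrow> ('a \<Rightarrow> 'b) \<Rightarrow> bool" where
  "lie_hom s1 br1 s2 br2 f \<longleftrightarrow> Vector_Spaces.linear s1 s2 f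
     \<and> (\<forall>x y. f (br1 x y) = br2 (f x) (f y))"

definition linear_family ::
  "('k::field \<Rightarrow> 'a::ab_group_add \<Rightarrow> 'a) \<Rightarrow> ('k \<Rightarrow> 'b::ab_group_add \<Rightarrow> 'b) \<Rightarrow>
   ('k \<Rightarrow> 'c::ab_group_add \<Rightarrow> 'c) \<Rightarrow> ('a \<Rightarrow> 'b \<Rightarrow> 'c) \<Rightarrow> bool" where
  "linear_family sa sb sc F \<longleftrightarrow>
     (\<forall>a. Vector_Spaces.linear sb sc (F a)) \<and> (\<forall>b. Vector_Spaces.linear sa sc (\<lambda>a. F a b))"

definition derivation ::
  "('k::field \<Rightarrow> 'a::ab_group_add \<Rightarrow> 'a) \<Rightarrow> ('a \<Rightarrow> 'a \<Rightarrow> 'a) \<Rightarrow> ('a \<Rightarrow> 'a) \<Rightarrow> bool" where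
  "derivation s br D \<longleftrightarrow> Vector_Spaces.linear s s D
     \<and> (\<forall>x y. D (br x y) = br (D x) y + br x (D y))"

definition crossed_module ::
  "('k::field \<Rightarrow> 'g::ab_group_add \<Rightarrow> 'g) \<Rightarrow> ('g \<Rightarrow> 'g \<Rightarrow> 'g) \<Rightarrow>
   ('k \<Rightarrow> 'h::ab_group_add \<Rightarrow> 'h) \<Rightarrow> ('h \<Rightarrow> 'h \<Rightarrow> 'h) \<Rightarrow>
   ('g \<Rightarrow> 'h) \<Rightarrow> ('h \<Rightarrow> 'g \<Rightarrow> 'g) \<Rightarrow> bool" where
  "crossed_module sg bg sh bh mu L \<longleftrightarrow>
     lie_algebra sg bg \<and> lie_algebra sh bh
     \<and> lie_hom sg bg sh bh mu
     \<and> (\<forall>y. derivation sg bg (L y))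
     \<and> (\<forall>x. Vector_Spaces.linear sh sg (\<lambda>y. L y x))
     \<and> (\<forall>y0 y1 x. L (bh y0 y1) x = L y0 (L y1 x) - L y1 (L y0 x))
     \<and> (\<forall>y x. mu (L y x) = bh y (mu x))
     \<and> (\<forall>x0 x1. L (mu x0) x1 = bg x0 x1)"

definition cm_morphism ::
  "('k::field \<Rightarrow> 'g::ab_group_add \<Rightarrow> 'g) \<Rightarrow> ('g \<Rightarrow> 'g \<Rightarrow> 'g) \<Rightarrow>
   ('k \<Rightarrow> 'h::ab_group_add \<Rightarrow> 'h) \<Rightarrow> ('h \<Rightarrow> 'h \<Rightarrow> 'h) \<Rightarrow>
   ('g \<Rightarrow> 'h) \<Rightarrow> ('h \<Rightarrow> 'g \<Rightarrow> 'g) \<Rightarrow>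
   ('k \<Rightarrow> 'g2::ab_group_add \<Rightarrow> 'g2) \<Rightarrow> ('g2 \<Rightarrow> 'g2 \<Rightarrow> 'g2) \<Rightarrow>
   ('k \<Rightarrow> 'h2::ab_group_add \<Rightarrow> 'h2) \<Rightarrow> ('h2 \<Rightarrow> 'h2 \<Rightarrow> 'h2) \<Rightarrow>
   ('g2 \<Rightarrow> 'h2) \<Rightarrow> ('h2 \<Rightarrow> 'g2 \<Rightarrow> 'g2) \<Rightarrow>
   ('g \<Rightarrow> 'g2) \<Rightarrow> ('h \<Rightarrow> 'h2) \<Rightarrow> bool" where
  "cm_morphism sg bg sh bh mu L sg' bg' sh' bh' mu' L' f1 f0 \<longleftrightarrow>
     lie_hom sg bg sg' bg' f1 \<and> lie_hom sh bh sh' bh' f0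
     \<and> (\<forall>x. f0 (mu x) = mu' (f1 x))
     \<and> (\<forall>y x. f1 (L y x) = L' (f0 y) (f1 x))"

definition cm_iso where
  "cm_iso sg bg sh bh mu L sg' bg' sh' bh' mu' L' f1 f0 \<longleftrightarrow>
     cm_morphism sg bg sh bh mu L sg' bg' sh' bh' mu' L' f1 f0
     \<and> (\<exists>g1 g0. cm_morphism sg' bg' sh' bh' mu' L' sg bg sh bh mu L g1 g0
          \<and> (\<forall>x. g1 (f1 x) = x) \<and> (\<forall>x. f1 (g1 x) = x)
          \<and> (\<forall>y. g0 (f0 y) = y) \<and> (\<forall>y. f0 (g0 y) = y))"

text \<open>Abelian brackets, zero action (used for W --phi--> V).\<close>
definition zero_br :: "'a \<Rightarrow> 'a \<Rightarrow> 'a::zero" where "zero_br x y = 0"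
definition zero_act :: "'b \<Rightarrow> 'a \<Rightarrow> 'a::zero" where "zero_act y x = 0"

definition two_rep where
  "two_rep sg bg sh bh mu L sW sV phi r01 r00 r1 \<longleftrightarrow>
     vector_space sW \<and> vector_space sV \<and> Vector_Spaces.linear sW sV phi
     \<and> linear_family sh sW sW r01 \<and> linear_family sh sV sV r00 \<and> linear_family sg sV sW r1
     \<and> (\<forall>y0 y1 w. r01 (bh y0 y1) w = r01 y0 (r01 y1 w) - r01 y1 (r01 y0 w))
     \<and> (\<forall>y0 y1 v. r00 (bh y0 y1) v = r00 y0 (r00 y1 v) - r00 y1 (r00 y0 v))
     \<and> (\<forall>y w. phi (r01 y w) = r00 y (phi w))
     \<and> (\<forall>x0 x1 v. r1 (bg x0 x1) v = r1 x0 (phi (r1 x1 v)) - r1 x1 (phi (r1 x0 v)))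
     \<and> (\<forall>x v. r00 (mu x) v = phi (r1 x v))
     \<and> (\<forall>x w. r01 (mu x) w = r1 x (phi w))
     \<and> (\<forall>y x v. r1 (L y x) v = r01 y (r1 x v) - r1 x (r00 y v))"

definition two_extension where
  "two_extension sg bg sh bh mu L sW sV phi se1 be1 se0 be0 eps Le i1 i0 p1 p0 \<longleftrightarrow>
     crossed_module se1 be1 se0 be0 eps Le
     \<and> cm_morphism sW zero_br sV zero_br phi zero_act se1 be1 se0 be0 eps Le i1 i0
     \<and> cm_morphism se1 be1 se0 be0 eps Le sg bg sh bh mu L p1 p0
     \<and> inj i1 \<and> surj p1 \<and> (\<forall>e. p1 e = 0 \<longleftrightarrow> e \<in> range i1)
     \<and> inj i0 \<and> surj p0 \<and> (\<forall>e. p0 e = 0 \<longleftrightarrow> e \<in> range i0)"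

definition ext_equiv where
  "ext_equiv se1 be1 se0 be0 eps Le i1 i0 p1 p0 se1' be1' se0' be0' eps' Le' i1' i0' p1' p0' \<longleftrightarrow>
     (\<exists>F1 F0. cm_iso se1 be1 se0 be0 eps Le se1' be1' se0' be0' eps' Le' F1 F0
        \<and> (\<forall>w. F1 (i1 w) = i1' w) \<and> (\<forall>v. F0 (i0 v) = i0' v)
        \<and> (\<forall>e. p1' (F1 e) = p1 e) \<and> (\<forall>e. p0' (F0 e) = p0 e))"

definition prod_scale ::
  "('k \<Rightarrow> 'a \<Rightarrow> 'a) \<Rightarrow> ('k \<Rightarrow> 'b \<Rightarrow> 'b) \<Rightarrow> 'k \<Rightarrow> 'a \<times> 'b \<Rightarrow> 'a \<times> 'b" where
  "prod_scale sa sb c p = (sa c (fst p), sb c (snd p))"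

definition e0_br where
  "e0_br bh r00 omega p q =
     (bh (fst p) (fst q), r00 (fst p) (snd q) - r00 (fst q) (snd p) - omega (fst p) (fst q))"

definition omega' where
  "omega' mu r1 alpha varphi x0 x1 = r1 x1 (varphi x0) + alpha (mu x0) x1"

definition e1_br where
  "e1_br bg mu r01 r1 alpha varphi p q =
     (bg (fst p) (fst q), r01 (mu (fst p)) (snd q) - r01 (mu (fst q)) (snd p)
        - omega' mu r1 alpha varphi (fst p) (fst q))"

definition e_eps where
  "e_eps mu phi varphi p = (mu (fst p), phi (snd p) + varphi (fst p))"

definition e_act where
  "e_act L r01 r1 alpha yv xw =
     (L (fst yv) (fst xw), r01 (fst yv) (snd xw) - r1 (fst xw) (snd yv) - alpha (fst yv) (fst xw))"

definition incl :: "'b \<Rightarrow> 'a::zero \<times> 'b" where "incl w = (0, w)"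

definition defines_2ext where
  "defines_2ext sg bg sh bh mu L sW sV phi r01 r00 r1 omega alpha varphi \<longleftrightarrow>
     two_extension sg bg sh bh mu L sW sV phi
       (prod_scale sg sW) (e1_br bg mu r01 r1 alpha varphi)
       (prod_scale sh sV) (e0_br bh r00 omega)
       (e_eps mu phi varphi) (e_act L r01 r1 alpha) incl incl fst fst"

definition ext_equiv_triples where
  "ext_equiv_triples sg bg sh bh mu L sW sV phi r01 r00 r1 omega1 alpha1 varphi1 omega2 alpha2 varphi2 \<longleftrightarrow>
     ext_equiv
       (prod_scale sg sW) (e1_br bg mu r01 r1 alpha1 varphi1)
       (prod_scale sh sV) (e0_br bh r00 omega1)
       (e_eps mu phi varphi1) (e_act L r01 r1 alpha1) incl incl fst fst
       (prod_scale sg sW) (e1_br bg mu r01 r1 alpha2 varphi2)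
       (prod_scale sh sV) (e0_br bh r00 omega2)
       (e_eps mu phi varphi2) (e_act L r01 r1 alpha2) incl incl fst fst"

end

theory Submission
  imports Defs
begin

(* An equivalence (F1, F0) of two such extensions is additive, fixes W and V and lies over g and h,
   so it is a shear (x, w) |-> (x, w + lam1 x), (y, v) |-> (y, v + lam0 y) with lam0, lam1 linear;
   its inverse is the shear by (-lam0, -lam1). Testing a shear against the brackets of e0, the
   structure maps and the actions on elements (y, 0), (x, 0) yields exactly (a), (c) and (b), and
   conversely these make it a morphism: compatibility with the bracket of e1 is then automatic,
   because rho1 x o phi = rho01 (mu x) and L (mu x0) = [x0, -]. *)

lemma linear_map_eqs:
  assumes "Vector_Spaces.linear s1 s2 f"
  shows "f (x + y) = f x + f y" "f (x - y) = f x - f y" "f (- x) = - f x" "f 0 = 0"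
    "f (s1 c x) = s2 c (f x)"
  using assms[folded module_hom_iff_linear]
  by (simp_all add: module_hom.add module_hom.diff module_hom.neg module_hom.zero module_hom.scale)

lemma linear_minus_fun:
  assumes "Vector_Spaces.linear s1 s2 f"
  shows "Vector_Spaces.linear s1 s2 (\<lambda>x. - f x)"
  using assms vector_space_pair.linear_compose_neg
  by (auto simp: Vector_Spaces.linear_def vector_space_pair_def)

lemma vector_space_prod_scale:
  assumes "vector_space sa" and "vector_space sb"
  shows "vector_space (prod_scale sa sb)"
  using assms unfolding vector_space_def prod_scale_def by (simp add: prod_eq_iff)

definition shear :: "('a \<Rightarrow> 'b) \<Rightarrow> 'a \<times> 'b \<Rightarrow> 'a \<times> 'b::plus" where
  "shear lam p = (fst p, snd p + lam (fst p))"

lemma shear_Pair [simp]: "shear lam (a, b) = (a, b + lam a)"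
  by (simp add: shear_def)

lemma fst_shear [simp]: "fst (shear lam p) = fst p"
  by (simp add: shear_def)

lemma shear_uminus_inverse:
  fixes lam :: "'a \<Rightarrow> 'b::ab_group_add"
  shows "shear (\<lambda>a. - lam a) (shear lam p) = p" "shear lam (shear (\<lambda>a. - lam a) p) = p"
  by (simp_all add: shear_def)

lemma shear_incl:
  fixes lam :: "'a::zero \<Rightarrow> 'b::monoid_add"
  shows "lam 0 = 0 \<Longrightarrow> shear lam (incl w) = incl w"
  by (simp add: incl_def)

lemma linear_shear:
  assumes "vector_space sa" and lam: "Vector_Spaces.linear sa sb lam"
  shows "Vector_Spaces.linear (prod_scale sa sb) (prod_scale sa sb) (shear lam)"
proof -
  have "vector_space sb" using lam by (simp add: Vector_Spaces.linear_iff)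
  then show ?thesis
    using assms unfolding Vector_Spaces.linear_iff
    by (simp add: vector_space_prod_scale shear_def prod_scale_def linear_map_eqs[OF lam]
        vector_space.vector_space_assms(1) algebra_simps)
qed

lemma linear_fixing_incl_and_fst_is_shear:
  assumes "vector_space sa" and "vector_space sb"
    and F: "Vector_Spaces.linear (prod_scale sa sb) (prod_scale sa sb) F"
    and F_incl: "\<forall>b. F (incl b) = incl b" and fst_F: "\<forall>p. fst (F p) = fst p"
  obtains lam where "Vector_Spaces.linear sa sb lam" and "F = shear lam"
proof
  define lam where "lam a = snd (F (a, 0))" for a
  have F_Pair: "F (a, b) = (a, b + lam a)" for a b
  proof -
    have "F (a, b) = F (a, 0) + F (incl b)"
      by (simp add: incl_def flip: linear_map_eqs(1)[OF F])
    also have "\<dots> = (a, lam a + b)"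
      using F_incl fst_F by (simp add: lam_def incl_def prod_eq_iff)
    finally show ?thesis by (simp add: add.commute)
  qed
  then show "F = shear lam"
    by (auto simp: shear_def)
  show "Vector_Spaces.linear sa sb lam"
    unfolding Vector_Spaces.linear_iff
  proof (intro conjI allI assms)
    fix a a'
    show "lam (a + a') = lam a + lam a'"
      using linear_map_eqs(1)[OF F, of "(a, 0)" "(a', 0)"] by (simp add: F_Pair)
  next
    fix c a
    show "lam (sa c a) = sb c (lam a)"
      using linear_map_eqs(5)[OF F, of c "(a, 0)"] \<open>vector_space sb\<close>
      by (simp add: F_Pair prod_scale_def module.scale_zero_right module_iff_vector_space)
  qed
qed

definition differ_by_coboundary where
  "differ_by_coboundary bh mu L phi r01 r00 r1 omega1 alpha1 varphi1 omega2 alpha2 varphi2 lam0 lam1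
     \<longleftrightarrow> (\<forall>y0 y1. omega2 y0 y1 - omega1 y0 y1
                     = r00 y0 (lam0 y1) - r00 y1 (lam0 y0) - lam0 (bh y0 y1))
       \<and> (\<forall>y x. alpha2 y x - alpha1 y x = r01 y (lam1 x) - lam1 (L y x) - r1 x (lam0 y))
       \<and> (\<forall>x. varphi2 x - varphi1 x = lam0 (mu x) - phi (lam1 x))"

lemma differ_by_coboundary_sym:
  assumes "two_rep sg bg sh bh mu L sW sV phi r01 r00 r1"
    and "differ_by_coboundary bh mu L phi r01 r00 r1 omega1 alpha1 varphi1 omega2 alpha2 varphi2
           lam0 lam1"
  shows "differ_by_coboundary bh mu L phi r01 r00 r1 omega2 alpha2 varphi2 omega1 alpha1 varphi1
           (\<lambda>y. - lam0 y) (\<lambda>x. - lam1 x)"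
proof -
  have "Vector_Spaces.linear sW sV phi" "Vector_Spaces.linear sV sV (r00 y)"
    "Vector_Spaces.linear sW sW (r01 y)" "Vector_Spaces.linear sV sW (r1 x)" for x y
    using assms(1) by (auto simp: two_rep_def linear_family_def)
  note neg = this[THEN linear_map_eqs(3)]
  show ?thesis
    using assms(2) unfolding differ_by_coboundary_def
    by (simp add: neg algebra_simps)
qed

lemma shear_e0_br_iff:
  assumes r00: "\<And>y. Vector_Spaces.linear sV sV (r00 y)"
  shows "(\<forall>p q. shear lam0 (e0_br bh r00 omega1 p q)
                = e0_br bh r00 omega2 (shear lam0 p) (shear lam0 q))
    \<longleftrightarrow> (\<forall>y0 y1. omega2 y0 y1 - omega1 y0 y1
                     = r00 y0 (lam0 y1) - r00 y1 (lam0 y0) - lam0 (bh y0 y1))"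
proof (intro iffI allI)
  fix y0 y1
  assume "\<forall>p q. shear lam0 (e0_br bh r00 omega1 p q)
                = e0_br bh r00 omega2 (shear lam0 p) (shear lam0 q)"
  from this[rule_format, of "(y0, 0)" "(y1, 0)"]
  show "omega2 y0 y1 - omega1 y0 y1 = r00 y0 (lam0 y1) - r00 y1 (lam0 y0) - lam0 (bh y0 y1)"
    by (simp add: e0_br_def linear_map_eqs(4)[OF r00] algebra_simps)
next
  fix p q
  assume "\<forall>y0 y1. omega2 y0 y1 - omega1 y0 y1
                     = r00 y0 (lam0 y1) - r00 y1 (lam0 y0) - lam0 (bh y0 y1)"
  then show "shear lam0 (e0_br bh r00 omega1 p q)
              = e0_br bh r00 omega2 (shear lam0 p) (shear lam0 q)"
    by (simp add: e0_br_def shear_def diff_eq_eq linear_map_eqs(1)[OF r00] algebra_simps)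
qed

lemma shear_e_eps_iff:
  assumes phi: "Vector_Spaces.linear sW sV phi"
  shows "(\<forall>p. shear lam0 (e_eps mu phi varphi1 p) = e_eps mu phi varphi2 (shear lam1 p))
    \<longleftrightarrow> (\<forall>x. varphi2 x - varphi1 x = lam0 (mu x) - phi (lam1 x))"
proof (intro iffI allI)
  fix x
  assume "\<forall>p. shear lam0 (e_eps mu phi varphi1 p) = e_eps mu phi varphi2 (shear lam1 p)"
  from this[rule_format, of "(x, 0)"] show "varphi2 x - varphi1 x = lam0 (mu x) - phi (lam1 x)"
    by (simp add: e_eps_def linear_map_eqs(4)[OF phi] algebra_simps)
next
  fix p
  assume "\<forall>x. varphi2 x - varphi1 x = lam0 (mu x) - phi (lam1 x)"
  then show "shear lam0 (e_eps mu phi varphi1 p) = e_eps mu phi varphi2 (shear lam1 p)"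
    by (simp add: e_eps_def shear_def diff_eq_eq linear_map_eqs(1)[OF phi] algebra_simps)
qed

lemma shear_e_act_iff:
  assumes r01: "\<And>y. Vector_Spaces.linear sW sW (r01 y)"
    and r1: "\<And>x. Vector_Spaces.linear sV sW (r1 x)"
  shows "(\<forall>q p. shear lam1 (e_act L r01 r1 alpha1 q p)
                = e_act L r01 r1 alpha2 (shear lam0 q) (shear lam1 p))
    \<longleftrightarrow> (\<forall>y x. alpha2 y x - alpha1 y x = r01 y (lam1 x) - lam1 (L y x) - r1 x (lam0 y))"
proof (intro iffI allI)
  fix y x
  assume "\<forall>q p. shear lam1 (e_act L r01 r1 alpha1 q p)
                = e_act L r01 r1 alpha2 (shear lam0 q) (shear lam1 p)"
  from this[rule_format, of "(y, 0)" "(x, 0)"]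
  show "alpha2 y x - alpha1 y x = r01 y (lam1 x) - lam1 (L y x) - r1 x (lam0 y)"
    by (simp add: e_act_def linear_map_eqs(4)[OF r01] linear_map_eqs(4)[OF r1] algebra_simps)
next
  fix q p
  assume "\<forall>y x. alpha2 y x - alpha1 y x = r01 y (lam1 x) - lam1 (L y x) - r1 x (lam0 y)"
  then show "shear lam1 (e_act L r01 r1 alpha1 q p)
              = e_act L r01 r1 alpha2 (shear lam0 q) (shear lam1 p)"
    by (simp add: e_act_def shear_def diff_eq_eq linear_map_eqs(1)[OF r01] linear_map_eqs(1)[OF r1]
        algebra_simps)
qed

lemma shear_e1_br:
  assumes cm: "crossed_module sg bg sh bh mu L"
    and rep: "two_rep sg bg sh bh mu L sW sV phi r01 r00 r1"
    and "differ_by_coboundary bh mu L phi r01 r00 r1 omega1 alpha1 varphi1 omega2 alpha2 varphi2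
           lam0 lam1"
  shows "shear lam1 (e1_br bg mu r01 r1 alpha1 varphi1 p q)
           = e1_br bg mu r01 r1 alpha2 varphi2 (shear lam1 p) (shear lam1 q)"
proof -
  have "Vector_Spaces.linear sW sV phi" "Vector_Spaces.linear sW sW (r01 y)"
    "Vector_Spaces.linear sV sW (r1 x)" for x y
    using rep by (auto simp: two_rep_def linear_family_def)
  note additive = this[THEN linear_map_eqs(1)] this[THEN linear_map_eqs(2)]
  have r1_phi: "r1 x (phi w) = r01 (mu x) w" for x w
    using rep by (simp add: two_rep_def)
  have L_mu: "L (mu x0) x1 = bg x0 x1" for x0 x1
    using cm by (simp add: crossed_module_def)
  have alpha2: "alpha2 y x = alpha1 y x + (r01 y (lam1 x) - lam1 (L y x) - r1 x (lam0 y))"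
    and varphi2: "varphi2 x = varphi1 x + (lam0 (mu x) - phi (lam1 x))" for x y
    using assms(3) unfolding differ_by_coboundary_def by (metis add.commute diff_add_cancel)+
  show ?thesis
    by (simp add: e1_br_def omega'_def shear_def alpha2 varphi2 r1_phi L_mu additive algebra_simps)
qed

lemma cm_morphism_shear_iff:
  assumes cm: "crossed_module sg bg sh bh mu L"
    and rep: "two_rep sg bg sh bh mu L sW sV phi r01 r00 r1"
    and lam0: "Vector_Spaces.linear sh sV lam0" and lam1: "Vector_Spaces.linear sg sW lam1"
  shows "cm_morphism
      (prod_scale sg sW) (e1_br bg mu r01 r1 alpha1 varphi1) (prod_scale sh sV) (e0_br bh r00 omega1)
      (e_eps mu phi varphi1) (e_act L r01 r1 alpha1)
      (prod_scale sg sW) (e1_br bg mu r01 r1 alpha2 varphi2) (prod_scale sh sV) (e0_br bh r00 omega2)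
      (e_eps mu phi varphi2) (e_act L r01 r1 alpha2)
      (shear lam1) (shear lam0)
    \<longleftrightarrow> differ_by_coboundary bh mu L phi r01 r00 r1 omega1 alpha1 varphi1 omega2 alpha2 varphi2
          lam0 lam1"
proof -
  have "vector_space sg" "vector_space sh"
    using cm by (auto simp: crossed_module_def lie_algebra_def)
  then have shears_linear:
    "Vector_Spaces.linear (prod_scale sg sW) (prod_scale sg sW) (shear lam1)"
    "Vector_Spaces.linear (prod_scale sh sV) (prod_scale sh sV) (shear lam0)"
    using lam0 lam1 by (simp_all add: linear_shear)
  have phi: "Vector_Spaces.linear sW sV phi" and r00: "\<And>y. Vector_Spaces.linear sV sV (r00 y)"
    and r01: "\<And>y. Vector_Spaces.linear sW sW (r01 y)"
    and r1: "\<And>x. Vector_Spaces.linear sV sW (r1 x)"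
    using rep by (auto simp: two_rep_def linear_family_def)
  show ?thesis
    unfolding cm_morphism_def lie_hom_def
      shear_e0_br_iff[OF r00] shear_e_eps_iff[OF phi] shear_e_act_iff[OF r01 r1]
    using shears_linear shear_e1_br[OF cm rep] unfolding differ_by_coboundary_def by blast
qed

lemma ext_equiv_triples_obtain_shears:
  assumes "vector_space sg" "vector_space sh" "vector_space sW" "vector_space sV"
    and "ext_equiv_triples sg bg sh bh mu L sW sV phi r01 r00 r1
           omega1 alpha1 varphi1 omega2 alpha2 varphi2"
  obtains lam0 lam1 where "Vector_Spaces.linear sh sV lam0" and "Vector_Spaces.linear sg sW lam1"
    and "cm_morphism
      (prod_scale sg sW) (e1_br bg mu r01 r1 alpha1 varphi1) (prod_scale sh sV) (e0_br bh r00 omega1)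
      (e_eps mu phi varphi1) (e_act L r01 r1 alpha1)
      (prod_scale sg sW) (e1_br bg mu r01 r1 alpha2 varphi2) (prod_scale sh sV) (e0_br bh r00 omega2)
      (e_eps mu phi varphi2) (e_act L r01 r1 alpha2)
      (shear lam1) (shear lam0)"
proof -
  obtain F1 F0 where F: "cm_morphism
      (prod_scale sg sW) (e1_br bg mu r01 r1 alpha1 varphi1) (prod_scale sh sV) (e0_br bh r00 omega1)
      (e_eps mu phi varphi1) (e_act L r01 r1 alpha1)
      (prod_scale sg sW) (e1_br bg mu r01 r1 alpha2 varphi2) (prod_scale sh sV) (e0_br bh r00 omega2)
      (e_eps mu phi varphi2) (e_act L r01 r1 alpha2) F1 F0"
    and "\<forall>w. F1 (incl w) = incl w" "\<forall>v. F0 (incl v) = incl v"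
    and "\<forall>e. fst (F1 e) = fst e" "\<forall>e. fst (F0 e) = fst e"
    using assms(5) unfolding ext_equiv_triples_def ext_equiv_def cm_iso_def by blast
  moreover from F have "Vector_Spaces.linear (prod_scale sg sW) (prod_scale sg sW) F1"
    and "Vector_Spaces.linear (prod_scale sh sV) (prod_scale sh sV) F0"
    unfolding cm_morphism_def lie_hom_def by blast+
  ultimately obtain lam0 lam1 where "Vector_Spaces.linear sh sV lam0" "F0 = shear lam0"
    and "Vector_Spaces.linear sg sW lam1" "F1 = shear lam1"
    using linear_fixing_incl_and_fst_is_shear[OF assms(1,3)]
      linear_fixing_incl_and_fst_is_shear[OF assms(2,4)] by metis
  with F that show thesis by blast
qed

lemma ext_equiv_triplesI_shears:
  fixes lam0 :: "'h::ab_group_add \<Rightarrow> 'v::ab_group_add"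
    and lam1 :: "'g::ab_group_add \<Rightarrow> 'w::ab_group_add"
  assumes "lam0 0 = 0" "lam1 0 = 0"
    and "cm_morphism
      (prod_scale sg sW) (e1_br bg mu r01 r1 alpha1 varphi1) (prod_scale sh sV) (e0_br bh r00 omega1)
      (e_eps mu phi varphi1) (e_act L r01 r1 alpha1)
      (prod_scale sg sW) (e1_br bg mu r01 r1 alpha2 varphi2) (prod_scale sh sV) (e0_br bh r00 omega2)
      (e_eps mu phi varphi2) (e_act L r01 r1 alpha2)
      (shear lam1) (shear lam0)"
    and "cm_morphism
      (prod_scale sg sW) (e1_br bg mu r01 r1 alpha2 varphi2) (prod_scale sh sV) (e0_br bh r00 omega2)
      (e_eps mu phi varphi2) (e_act L r01 r1 alpha2)
      (prod_scale sg sW) (e1_br bg mu r01 r1 alpha1 varphi1) (prod_scale sh sV) (e0_br bh r00 omega1)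
      (e_eps mu phi varphi1) (e_act L r01 r1 alpha1)
      (shear (\<lambda>x. - lam1 x)) (shear (\<lambda>y. - lam0 y))"
  shows "ext_equiv_triples sg bg sh bh mu L sW sV phi r01 r00 r1
           omega1 alpha1 varphi1 omega2 alpha2 varphi2"
  unfolding ext_equiv_triples_def ext_equiv_def cm_iso_def
  using assms
  by (intro exI[of _ "shear lam1"] exI[of _ "shear lam0"] conjI allI
      exI[of _ "shear (\<lambda>x. - lam1 x)"] exI[of _ "shear (\<lambda>y. - lam0 y)"])
    (simp_all add: shear_uminus_inverse shear_incl)

lemma ext_equiv_triples_iff_differ_by_coboundary:
  assumes cm: "crossed_module sg bg sh bh mu L"
    and rep: "two_rep sg bg sh bh mu L sW sV phi r01 r00 r1"
  shows "ext_equiv_triples sg bg sh bh mu L sW sV phi r01 r00 r1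
           omega1 alpha1 varphi1 omega2 alpha2 varphi2
    \<longleftrightarrow> (\<exists>lam0 lam1. Vector_Spaces.linear sh sV lam0 \<and> Vector_Spaces.linear sg sW lam1
          \<and> differ_by_coboundary bh mu L phi r01 r00 r1
               omega1 alpha1 varphi1 omega2 alpha2 varphi2 lam0 lam1)"
proof
  assume "ext_equiv_triples sg bg sh bh mu L sW sV phi r01 r00 r1
    omega1 alpha1 varphi1 omega2 alpha2 varphi2"
  moreover have "vector_space sg" "vector_space sh"
    using cm by (auto simp: crossed_module_def lie_algebra_def)
  moreover have "vector_space sW" "vector_space sV"
    using rep by (auto simp: two_rep_def)
  ultimately show "\<exists>lam0 lam1. Vector_Spaces.linear sh sV lam0 \<and> Vector_Spaces.linear sg sW lam1
    \<and> differ_by_coboundary bh mu L phi r01 r00 r1 omega1 alpha1 varphi1 omega2 alpha2 varphi2 lam0 lam1"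
    by (metis ext_equiv_triples_obtain_shears cm_morphism_shear_iff[OF cm rep])
next
  assume "\<exists>lam0 lam1. Vector_Spaces.linear sh sV lam0 \<and> Vector_Spaces.linear sg sW lam1
    \<and> differ_by_coboundary bh mu L phi r01 r00 r1 omega1 alpha1 varphi1 omega2 alpha2 varphi2 lam0 lam1"
  then obtain lam0 lam1 where lam0: "Vector_Spaces.linear sh sV lam0"
    and lam1: "Vector_Spaces.linear sg sW lam1"
    and cob: "differ_by_coboundary bh mu L phi r01 r00 r1
      omega1 alpha1 varphi1 omega2 alpha2 varphi2 lam0 lam1"
    by blast
  have "Vector_Spaces.linear sh sV (\<lambda>y. - lam0 y)" "Vector_Spaces.linear sg sW (\<lambda>x. - lam1 x)"
    using lam0 lam1 by (simp_all add: linear_minus_fun)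
  note inverse_morphism = cm_morphism_shear_iff[OF cm rep this, THEN iffD2]
  show "ext_equiv_triples sg bg sh bh mu L sW sV phi r01 r00 r1
    omega1 alpha1 varphi1 omega2 alpha2 varphi2"
    by (rule ext_equiv_triplesI_shears[OF linear_map_eqs(4)[OF lam0] linear_map_eqs(4)[OF lam1]
          cm_morphism_shear_iff[OF cm rep lam0 lam1, THEN iffD2, OF cob]
          inverse_morphism[OF differ_by_coboundary_sym[OF rep cob]]])
qed

theorem mainTheorem17:
  fixes sg :: "'k::field \<Rightarrow> 'g::ab_group_add \<Rightarrow> 'g" and bg :: "'g \<Rightarrow> 'g \<Rightarrow> 'g"
    and sh :: "'k \<Rightarrow> 'h::ab_group_add \<Rightarrow> 'h" and bh :: "'h \<Rightarrow> 'h \<Rightarrow> 'h"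
    and sW :: "'k \<Rightarrow> 'w::ab_group_add \<Rightarrow> 'w" and sV :: "'k \<Rightarrow> 'v::ab_group_add \<Rightarrow> 'v"
    and mu :: "'g \<Rightarrow> 'h" and L :: "'h \<Rightarrow> 'g \<Rightarrow> 'g" and phi :: "'w \<Rightarrow> 'v"
    and r01 :: "'h \<Rightarrow> 'w \<Rightarrow> 'w" and r00 :: "'h \<Rightarrow> 'v \<Rightarrow> 'v" and r1 :: "'g \<Rightarrow> 'v \<Rightarrow> 'w"
    and omega1 omega2 :: "'h \<Rightarrow> 'h \<Rightarrow> 'v"
    and alpha1 alpha2 :: "'h \<Rightarrow> 'g \<Rightarrow> 'w"
    and varphi1 varphi2 :: "'g \<Rightarrow> 'v"
  assumes cm: "crossed_module sg bg sh bh mu L"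
    and rep: "two_rep sg bg sh bh mu L sW sV phi r01 r00 r1"
    and om1: "linear_family sh sh sV omega1" "\<forall>y. omega1 y y = 0"
    and om2: "linear_family sh sh sV omega2" "\<forall>y. omega2 y y = 0"
    and al1: "linear_family sh sg sW alpha1"
    and al2: "linear_family sh sg sW alpha2"
    and vp1: "Vector_Spaces.linear sg sV varphi1"
    and vp2: "Vector_Spaces.linear sg sV varphi2"
    and E1: "defines_2ext sg bg sh bh mu L sW sV phi r01 r00 r1 omega1 alpha1 varphi1"
    and E2: "defines_2ext sg bg sh bh mu L sW sV phi r01 r00 r1 omega2 alpha2 varphi2"
  shows "ext_equiv_triples sg bg sh bh mu L sW sV phi r01 r00 r1
           omega1 alpha1 varphi1 omega2 alpha2 varphi2
         \<longleftrightarrow> (\<exists>lam0 lam1. Vector_Spaces.linear sh sV lam0 \<and> Vector_Spaces.linear sg sW lam1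
              \<and> (\<forall>y0 y1. omega2 y0 y1 - omega1 y0 y1
                     = r00 y0 (lam0 y1) - r00 y1 (lam0 y0) - lam0 (bh y0 y1))
              \<and> (\<forall>y x. alpha2 y x - alpha1 y x
                     = r01 y (lam1 x) - lam1 (L y x) - r1 x (lam0 y))
              \<and> (\<forall>x. varphi2 x - varphi1 x = lam0 (mu x) - phi (lam1 x)))"
  using ext_equiv_triples_iff_differ_by_coboundary[OF cm rep]
  unfolding differ_by_coboundary_def .

end
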